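(* Let $G$ be a simple cycle-extendable graph, let $x_0$ be a vertex of degree two in $G$, and let $J'=G/x_0$. Then either $J'$ is simple or $J'$ has exactly two multiple edges (that is, exactly one pair of parallel edges and no other parallel edges). Furthermore, if $G$ is irreducible, then the underlying simple graph of $J'$ is also irreducible.
   Context: A graph is matching covered if it is connected, has at least two vertices, and every edge lies in some perfect matching; it is cycle-extendable if moreover for every even cycle $C$ the graph $G-V(C)$ has a perfect matching. $G/x_0$ is the graph obtained from $G$ by contracting both edges incident with the degree-two vertex $x_0$ into a single vertex (parallel edges may arise). A graph is irreducible if it is simple and its vertices of degree two form a stable set. *)

theory Defs
  imports Main "HOL-Library.Multiset"
begin

definition simple_graph :: "'a set \<Rightarrow> 'a set set \<Rightarrow> bool" where
  "simple_graph V E \<longleftrightarrow> finite V \<and>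
     (\<forall>e\<in>E. \<exists>a b. a \<noteq> b \<and> a \<in> V \<and> b \<in> V \<and> e = {a, b})"

definition perfect_matching :: "'a set \<Rightarrow> 'a set set \<Rightarrow> 'a set set \<Rightarrow> bool" where
  "perfect_matching V E M \<longleftrightarrow> M \<subseteq> E \<and> (\<forall>v\<in>V. \<exists>!e. e \<in> M \<and> v \<in> e)"

definition has_perfect_matching :: "'a set \<Rightarrow> 'a set set \<Rightarrow> bool" where
  "has_perfect_matching V E \<longleftrightarrow> (\<exists>M. perfect_matching V E M)"

definition graph_connected :: "'a set \<Rightarrow> 'a set set \<Rightarrow> bool" where
  "graph_connected V E \<longleftrightarrow>
     (\<forall>u\<in>V. \<forall>v\<in>V. (u, v) \<in> {(a, b). {a, b} \<in> E}\<^sup>*)"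

definition matching_covered :: "'a set \<Rightarrow> 'a set set \<Rightarrow> bool" where
  "matching_covered V E \<longleftrightarrow> graph_connected V E \<and> 2 \<le> card V \<and>
     (\<forall>e\<in>E. \<exists>M. perfect_matching V E M \<and> e \<in> M)"

definition is_cycle :: "'a set \<Rightarrow> 'a set set \<Rightarrow> 'a list \<Rightarrow> bool" where
  "is_cycle V E cs \<longleftrightarrow> distinct cs \<and> 3 \<le> length cs \<and> set cs \<subseteq> V \<and>
     (\<forall>i < length cs. {cs ! i, cs ! ((i + 1) mod length cs)} \<in> E)"

definition del_edges :: "'a set set \<Rightarrow> 'a set \<Rightarrow> 'a set set" where
  "del_edges E S = {e \<in> E. e \<inter> S = {}}"

definition cycle_extendable :: "'a set \<Rightarrow> 'a set set \<Rightarrow> bool" where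
  "cycle_extendable V E \<longleftrightarrow> matching_covered V E \<and>
     (\<forall>cs. is_cycle V E cs \<and> even (length cs) \<longrightarrow>
        has_perfect_matching (V - set cs) (del_edges E (set cs)))"

definition neighbours :: "'a set set \<Rightarrow> 'a \<Rightarrow> 'a set" where
  "neighbours E v = {u. {v, u} \<in> E}"

definition degree :: "'a set set \<Rightarrow> 'a \<Rightarrow> nat" where
  "degree E v = card (neighbours E v)"

definition irreducible :: "'a set \<Rightarrow> 'a set set \<Rightarrow> bool" where
  "irreducible V E \<longleftrightarrow> simple_graph V E \<and>
     (\<forall>a b. {a, b} \<in> E \<longrightarrow> \<not> (degree E a = 2 \<and> degree E b = 2))"

text \<open>Contraction G/x0: both neighbours of x0 and x0 itself are identified into a single
  vertex, which is named x0. The result is a multigraph whose edges form a multiset of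
  vertex sets (a set of cardinality 1 would be a loop).\<close>
definition contr_map :: "'a set set \<Rightarrow> 'a \<Rightarrow> 'a \<Rightarrow> 'a" where
  "contr_map E x0 v = (if v \<in> neighbours E x0 then x0 else v)"

definition contr_V :: "'a set \<Rightarrow> 'a set set \<Rightarrow> 'a \<Rightarrow> 'a set" where
  "contr_V V E x0 = V - neighbours E x0"

definition contr_E :: "'a set set \<Rightarrow> 'a \<Rightarrow> 'a set multiset" where
  "contr_E E x0 = image_mset (\<lambda>e. contr_map E x0 ` e) (mset_set {e \<in> E. x0 \<notin> e})"

definition mg_simple :: "'a set multiset \<Rightarrow> bool" where
  "mg_simple ME \<longleftrightarrow> (\<forall>e\<in>#ME. card e = 2 \<and> count ME e = 1)"

definition mg_exactly_two_multiple_edges :: "'a set multiset \<Rightarrow> bool" where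
  "mg_exactly_two_multiple_edges ME \<longleftrightarrow>
     card {e. 2 \<le> count ME e} = 1 \<and> (\<forall>e. count ME e \<le> 2)"

definition underlying_simple :: "'a set multiset \<Rightarrow> 'a set set" where
  "underlying_simple ME = {e \<in> set_mset ME. card e = 2}"

end

theory Submission
  imports Defs
begin

(* Let u, w be the neighbours of x0. Contracting identifies u, w and x0, so parallel edges of G/x0
   come exactly from common neighbours of u and w other than x0 (u and w are not adjacent: a
   perfect matching through uw leaves x0 unmatched). Two such common neighbours a, b would span the
   even cycle u a w b, whose removal isolates x0, contradicting cycle-extendability.

   Degrees survive the contraction except at x0 and at common neighbours of u and w. In an
   irreducible G both u and w have degree at least 3, and then x0 gets degree at least 3. A common
   neighbour a ending up with degree 2 has N(a) = {u, w, c}. Take a perfect matching M containing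
   ac, let p be the M-partner of x0, and a perfect matching N containing an edge pr with
   r distinct from x0 and a. Then N matches x0 to the other neighbour q and a to c, so the
   M-N-alternating cycle through x0 misses a; rerouting it through a instead of x0 gives an even
   cycle through u and w avoiding x0, again a contradiction. *)

section \<open>Simple graphs and perfect matchings\<close>

lemma simple_graph_edgeD:
  assumes "simple_graph V E" "{p, q} \<in> E"
  shows "p \<in> V" "q \<in> V" "p \<noteq> q"
proof -
  obtain a b where "a \<noteq> b" "a \<in> V" "b \<in> V" "{p, q} = {a, b}"
    using assms unfolding simple_graph_def by blast
  then show "p \<in> V" "q \<in> V" "p \<noteq> q" by (auto simp: doubleton_eq_iff)
qed

lemma simple_graph_edgeE:
  assumes "simple_graph V E" "e \<in> E"
  obtains p q where "e = {p, q}" "p \<noteq> q" "p \<in> V" "q \<in> V"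
  using assms unfolding simple_graph_def by blast

lemma simple_graph_finite_edges:
  assumes "simple_graph V E"
  shows "finite E"
proof -
  have "E \<subseteq> Pow V" by (auto elim!: simple_graph_edgeE[OF assms])
  moreover have "finite V" using assms by (simp add: simple_graph_def)
  ultimately show ?thesis by (meson finite_Pow_iff finite_subset)
qed

lemma simple_graph_finite_neighbours:
  assumes "simple_graph V E"
  shows "finite (neighbours E v)"
proof -
  have "neighbours E v \<subseteq> V" using simple_graph_edgeD[OF assms] by (auto simp: neighbours_def)
  then show ?thesis using assms finite_subset by (auto simp: simple_graph_def)
qed

(* Outside V, mate is the identity, so that mate V M is an involution of the whole type. *)
definition mate :: "'a set \<Rightarrow> 'a set set \<Rightarrow> 'a \<Rightarrow> 'a" where
  "mate V M v = (if v \<in> V then (THE y. {v, y} \<in> M) else v)"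

lemma
  assumes "simple_graph V E" "perfect_matching V E M" "v \<in> V"
  shows mate_in_matching: "{v, mate V M v} \<in> M"
    and mate_eqI: "{v, y} \<in> M \<Longrightarrow> mate V M v = y"
proof -
  have M_sub: "M \<subseteq> E" and "\<exists>!e. e \<in> M \<and> v \<in> e"
    using assms(2,3) by (simp_all add: perfect_matching_def)
  then obtain e where e: "e \<in> M" "v \<in> e"
    and e_unique: "\<And>e'. e' \<in> M \<Longrightarrow> v \<in> e' \<Longrightarrow> e' = e"
    by (elim ex1E) blast
  have "e \<in> E" using e M_sub by blast
  then obtain p q where "e = {p, q}" by (rule simple_graph_edgeE[OF assms(1)])
  then have "e = {v, q} \<or> e = {v, p}" using e(2) by (auto simp: insert_commute)
  then obtain z where z: "e = {v, z}" by blast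
  have z_unique: "z' = z" if "{v, z'} \<in> M" for z'
    using e_unique[OF that] z by (auto simp: doubleton_eq_iff)
  have "(THE z'. {v, z'} \<in> M) = z"
    using e(1) z z_unique by (blast intro: the_equality)
  then have "mate V M v = z" using assms(3) by (simp add: mate_def)
  then show "{v, mate V M v} \<in> M" "{v, y} \<in> M \<Longrightarrow> mate V M v = y"
    using e(1) z z_unique by blast+
qed

definition matching_involution :: "'a set \<Rightarrow> 'a set set \<Rightarrow> ('a \<Rightarrow> 'a) \<Rightarrow> bool" where
  "matching_involution V E m \<longleftrightarrow>
     (\<forall>x. m (m x) = x) \<and> (\<forall>x\<in>V. m x \<in> V \<and> m x \<noteq> x \<and> {x, m x} \<in> E)"

lemma matching_involution_mate:
  assumes "simple_graph V E" "perfect_matching V E M"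
  shows "matching_involution V E (mate V M)"
proof -
  have edge: "{x, mate V M x} \<in> E" if "x \<in> V" for x
    using mate_in_matching[OF assms that] assms(2) by (auto simp: perfect_matching_def)
  note mate_props = simple_graph_edgeD[OF assms(1) edge]
  have mate_mate: "mate V M (mate V M x) = x" for x
  proof (cases "x \<in> V")
    case True
    have "{mate V M x, x} \<in> M" using mate_in_matching[OF assms True] by (simp add: insert_commute)
    then show ?thesis using mate_eqI[OF assms mate_props(2)[OF True]] by blast
  qed (simp add: mate_def)
  show ?thesis
    unfolding matching_involution_def
  proof (intro conjI allI ballI)
    fix x assume "x \<in> V"
    then show "mate V M x \<in> V" "mate V M x \<noteq> x" "{x, mate V M x} \<in> E"
      using edge mate_props by (blast, metis, blast)
  qed (rule mate_mate)
qed

section \<open>Alternating cycles\<close>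

lemma is_cycle_update_first:
  assumes cyc: "is_cycle V E cs" and y: "y \<notin> set cs" "y \<in> V"
    and first: "{y, cs ! 1} \<in> E" and last: "{last cs, y} \<in> E"
  shows "is_cycle V E (cs[0 := y])"
proof -
  let ?L = "length cs"
  have L: "3 \<le> ?L" and dist: "distinct cs" and sub: "set cs \<subseteq> V"
    and edges: "\<And>i. i < ?L \<Longrightarrow> {cs ! i, cs ! ((i + 1) mod ?L)} \<in> E"
    using cyc unfolding is_cycle_def by auto
  have upd: "cs[0 := y] ! j = (if j = 0 then y else cs ! j)" for j
    using L by (cases cs) (auto simp: nth_list_update)
  have "{cs[0 := y] ! i, cs[0 := y] ! ((i + 1) mod ?L)} \<in> E" if i: "i < ?L" for i
  proof -
    consider "i = 0" | "i = ?L - 1" | "0 < i" "i + 1 < ?L" using i L by linarith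
    then show ?thesis
    proof cases
      case 1 then show ?thesis using L first by (simp add: upd)
    next
      case 2
      have "cs \<noteq> []" using L by auto
      then have "cs ! i = last cs" using 2 by (simp add: last_conv_nth)
      moreover have "i + 1 = ?L" using 2 L by linarith
      ultimately show ?thesis using last L by (simp add: upd)
    next
      case 3 then show ?thesis using edges[OF i] by (simp add: upd)
    qed
  qed
  moreover have "distinct (cs[0 := y])" using distinct_list_update[OF dist] y(1) by blast
  moreover have "set (cs[0 := y]) \<subseteq> V" using set_update_subsetI[OF sub y(2)] .
  ultimately show ?thesis unfolding is_cycle_def using L by simp
qed

lemma funpow_orbit_period:
  fixes f :: "'a \<Rightarrow> 'a"
  assumes "finite V" "inj f" "f ` V \<subseteq> V" "v \<in> V"
  obtains k where "0 < k" "(f ^^ k) v = v" "inj_on (\<lambda>i. (f ^^ i) v) {..<k}"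
proof -
  define F where "F i = (f ^^ i) v" for i
  have shift: "F d = v" if "F (i + d) = F i" for i d
    using that injD[OF inj_fn[OF assms(2), of i]] by (simp add: F_def funpow_add)
  have "F i \<in> V" for i by (induction i) (use assms(3,4) in \<open>auto simp: F_def\<close>)
  then have "\<not> inj_on F {..card V}"
    using card_inj_on_le[of F "{..card V}" V] assms(1) by fastforce
  then obtain i j where "i < j" "F i = F j"
    unfolding inj_on_def by (metis atMost_iff linorder_neqE_nat)
  then have "F (j - i) = v" using shift[of i "j - i"] by simp
  then have ex: "\<exists>p. 0 < p \<and> F p = v" using \<open>i < j\<close> zero_less_diff by blast
  define k where "k = (LEAST p. 0 < p \<and> F p = v)"
  have k: "0 < k" "F k = v" using LeastI_ex[OF ex] by (simp_all add: k_def)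
  have "i = j" if ij: "i < k" "j < k" "F i = F j" for i j
  proof (rule ccontr)
    assume "i \<noteq> j"
    then obtain a b where "a < b" "b < k" "F a = F b" using ij by (metis linorder_neqE_nat)
    then have "F (b - a) = v" using shift[of a "b - a"] by simp
    moreover have "b - a < k" using \<open>b < k\<close> by linarith
    ultimately show False
      using not_less_Least[of "b - a" "\<lambda>p. 0 < p \<and> F p = v"] \<open>a < b\<close> by (simp add: k_def)
  qed
  then show thesis using that k by (auto simp: F_def inj_on_def)
qed

lemma matching_involutionD:
  assumes "matching_involution V E m"
  shows "m (m x) = x" and "x \<in> V \<Longrightarrow> m x \<in> V" and "x \<in> V \<Longrightarrow> m x \<noteq> x"
    and "x \<in> V \<Longrightarrow> {x, m x} \<in> E"
  using assms unfolding matching_involution_def by auto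

lemma matching_involution_inj:
  assumes "matching_involution V E m"
  shows "inj m"
proof (rule injI)
  fix x y assume "m x = m y"
  then have "m (m x) = m (m y)" by simp
  then show "x = y" using matching_involutionD(1)[OF assms] by simp
qed

lemma alternating_orbit_parity:
  assumes m: "matching_involution V E m" and n: "matching_involution V E n" and v: "v \<in> V"
  shows "((m \<circ> n) ^^ i) v \<noteq> n (((m \<circ> n) ^^ j) v)"
proof
  define f where "f = m \<circ> n"
  assume eq: "(f ^^ i) v = n ((f ^^ j) v)"
  note mD = matching_involutionD[OF m] and nD = matching_involutionD[OF n]
  have inj_f: "inj f"
    unfolding f_def using inj_compose matching_involution_inj[OF m] matching_involution_inj[OF n] by blast
  have fV: "(f ^^ i) x \<in> V" if "x \<in> V" for i x
    by (induction i) (simp_all add: f_def mD(2) nD(2) that)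
  \<comment> \<open>Conjugation by n inverts f.\<close>
  have reflect: "(f ^^ t) (n ((f ^^ t) x)) = n x" for t x
  proof (induction t arbitrary: x)
    case (Suc t)
    have "(f ^^ Suc t) (n ((f ^^ Suc t) x)) = f ((f ^^ t) (n ((f ^^ t) (f x))))"
      by (simp only: funpow.simps(2) comp_apply funpow_swap1[of f t x])
    also have "\<dots> = f (n (f x))" using Suc.IH by simp
    also have "\<dots> = n x" by (simp add: f_def mD(1) nD(1))
    finally show ?case .
  qed simp
  define s where "s = j + i"
  define t where "t = s div 2"
  \<comment> \<open>Then n maps the midpoint of the orbit segment of length s to itself or to its m-partner.\<close>
  have "n v = (f ^^ s) v"
    using reflect[of j v] eq by (simp add: s_def funpow_add)
  also have "\<dots> = (f ^^ t) ((f ^^ (s - t)) v)"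
    using funpow_add[of t "s - t" f] by (simp add: t_def)
  finally have "(f ^^ t) (n ((f ^^ t) v)) = (f ^^ t) ((f ^^ (s - t)) v)"
    using reflect[of t v] by simp
  then have partner: "n ((f ^^ t) v) = (f ^^ (s - t)) v"
    using injD[OF inj_fn[OF inj_f]] by blast
  show False
  proof (cases "even s")
    case True
    then have "s - t = t" by (auto simp: t_def)
    then show False using partner nD(3)[OF fV[OF v]] by simp
  next
    case False
    then have "s - t = Suc t" by (auto simp: t_def elim!: oddE)
    then have "m (n ((f ^^ t) v)) = n ((f ^^ t) v)" using partner by (simp add: f_def)
    then show False using mD(3) nD(2) fV v by blast
  qed
qed

lemma alternating_orbit:
  assumes fin: "finite V" and m: "matching_involution V E m" and n: "matching_involution V E n"
    and v: "v \<in> V" and mn: "m v \<noteq> n v"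
  obtains k where "2 \<le> k" "((m \<circ> n) ^^ k) v = v" "inj_on (\<lambda>i. ((m \<circ> n) ^^ i) v) {..<k}"
    "\<And>i. ((m \<circ> n) ^^ Suc i) v \<noteq> ((m \<circ> n) ^^ i) v"
proof -
  note mD = matching_involutionD[OF m] and nD = matching_involutionD[OF n]
  have inj: "inj (m \<circ> n)"
    using inj_compose matching_involution_inj[OF m] matching_involution_inj[OF n] by blast
  have "(m \<circ> n) ` V \<subseteq> V" using mD(2) nD(2) by auto
  then obtain k where k: "0 < k" "((m \<circ> n) ^^ k) v = v"
    "inj_on (\<lambda>i. ((m \<circ> n) ^^ i) v) {..<k}"
    using funpow_orbit_period[OF fin inj _ v] by blast
  have step: "((m \<circ> n) ^^ Suc i) v \<noteq> ((m \<circ> n) ^^ i) v" for i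
  proof
    assume "((m \<circ> n) ^^ Suc i) v = ((m \<circ> n) ^^ i) v"
    then have "((m \<circ> n) ^^ i) (m (n v)) = ((m \<circ> n) ^^ i) v"
      by (simp add: funpow_swap1)
    then have "m (n v) = v" using injD[OF inj_fn[OF inj]] by blast
    then have "n v = m v" using mD(1) by metis
    then show False using mn by simp
  qed
  have "k \<noteq> 1" using k(2) step[of 0] by auto
  then have "2 \<le> k" using k(1) by linarith
  then show thesis using that k(2,3) step by blast
qed

lemma is_cycle_map_upt:
  assumes "3 \<le> L" "inj_on z {..<L}" "\<And>i. i < L \<Longrightarrow> z i \<in> V"
    and "\<And>i. i < L \<Longrightarrow> {z i, z (Suc i)} \<in> E" and "z L = z 0"
  shows "is_cycle V E (map z [0..<L])"
proof -
  have "z ((i + 1) mod L) = z (Suc i)" if "i < L" for i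
    using that assms(5) by (cases "Suc i = L") simp_all
  then show ?thesis
    unfolding is_cycle_def using assms by (auto simp: distinct_map lessThan_atLeast0)
qed

definition alternating_walk :: "('a \<Rightarrow> 'a) \<Rightarrow> ('a \<Rightarrow> 'a) \<Rightarrow> 'a \<Rightarrow> nat \<Rightarrow> 'a" where
  "alternating_walk m n v i =
     (if even i then ((m \<circ> n) ^^ (i div 2)) v else n (((m \<circ> n) ^^ (i div 2)) v))"

lemma alternating_walk_Suc:
  "alternating_walk m n v (Suc i) =
     (if even i then n (alternating_walk m n v i) else m (alternating_walk m n v i))"
  by (auto simp: alternating_walk_def elim!: oddE)

lemma alternating_walk_edge:
  assumes m: "matching_involution V E m" and n: "matching_involution V E n" and v: "v \<in> V"
  shows "alternating_walk m n v i \<in> V"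
    and "{alternating_walk m n v i, alternating_walk m n v (Suc i)} \<in> E"
proof -
  note mD = matching_involutionD[OF m] and nD = matching_involutionD[OF n]
  have "((m \<circ> n) ^^ j) v \<in> V" for j by (induction j) (simp_all add: v mD(2) nD(2))
  then show walk_V: "alternating_walk m n v i \<in> V" by (simp add: alternating_walk_def nD(2))
  show "{alternating_walk m n v i, alternating_walk m n v (Suc i)} \<in> E"
    using mD(4)[OF walk_V] nD(4)[OF walk_V] by (simp add: alternating_walk_Suc)
qed

lemma alternating_walk_inj_on:
  assumes m: "matching_involution V E m" and n: "matching_involution V E n" and v: "v \<in> V"
    and orbit_inj: "inj_on (\<lambda>i. ((m \<circ> n) ^^ i) v) {..<k}"
  shows "inj_on (alternating_walk m n v) {..<2 * k}"
proof (rule inj_onI)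
  fix i j assume "i \<in> {..<2 * k}" "j \<in> {..<2 * k}"
    and eq: "alternating_walk m n v i = alternating_walk m n v j"
  then have ij: "i div 2 < k" "j div 2 < k" by auto
  note parity = alternating_orbit_parity[OF m n v]
  have "even i = even j" using eq parity by (auto simp: alternating_walk_def split: if_splits) metis
  moreover have "((m \<circ> n) ^^ (i div 2)) v = ((m \<circ> n) ^^ (j div 2)) v"
    using eq \<open>even i = even j\<close> matching_involutionD(1)[OF n]
    by (auto simp: alternating_walk_def split: if_splits) metis
  then have "i div 2 = j div 2" using orbit_inj ij by (auto simp: inj_on_def)
  ultimately show "i = j" by (metis div_mult_mod_eq mod2_eq_if)
qed

lemma alternating_cycle:
  assumes fin: "finite V" and m: "matching_involution V E m" and n: "matching_involution V E n"
    and v: "v \<in> V" and mn: "m v \<noteq> n v"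
  obtains cs where "is_cycle V E cs" "even (length cs)" "cs ! 0 = v" "cs ! 1 = n v"
    "last cs = m v" "\<forall>x\<in>set cs. m x \<noteq> n x"
proof -
  note mD = matching_involutionD[OF m] and nD = matching_involutionD[OF n]
  obtain k where k: "2 \<le> k" "((m \<circ> n) ^^ k) v = v"
    and orbit_inj: "inj_on (\<lambda>i. ((m \<circ> n) ^^ i) v) {..<k}"
    and orbit_step: "\<And>i. ((m \<circ> n) ^^ Suc i) v \<noteq> ((m \<circ> n) ^^ i) v"
    using alternating_orbit[OF fin m n v mn] by blast
  let ?z = "alternating_walk m n v"
  define cs where "cs = map ?z [0..<2 * k]"
  have "?z (2 * k) = ?z 0" using k(2) by (simp add: alternating_walk_def)
  then have "is_cycle V E cs"
    unfolding cs_def using k(1) alternating_walk_edge[OF m n v] alternating_walk_inj_on[OF m n v orbit_inj]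
    by (intro is_cycle_map_upt) auto
  moreover have "last cs = m v"
  proof -
    have "Suc (2 * k - 1) = 2 * k" "odd (2 * k - 1)" using k(1) by simp_all
    then have "m (?z (2 * k - 1)) = v" using alternating_walk_Suc[of m n v "2 * k - 1"] k(2)
      by (simp add: alternating_walk_def)
    then have "?z (2 * k - 1) = m v" using mD(1) by metis
    then show ?thesis using k(1) by (simp add: cs_def last_map)
  qed
  moreover have "cs ! 0 = v" "cs ! 1 = n v" using k(1) by (simp_all add: cs_def alternating_walk_def)
  moreover have "m (?z i) \<noteq> n (?z i)" for i
  proof
    assume "m (?z i) = n (?z i)"
    then have "m (n (((m \<circ> n) ^^ (i div 2)) v)) = ((m \<circ> n) ^^ (i div 2)) v"
      using mD(1) nD(1) by (cases "even i") (simp_all add: alternating_walk_def, metis)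
    then show False using orbit_step[of "i div 2"] by simp
  qed
  then have "\<forall>x\<in>set cs. m x \<noteq> n x" by (auto simp: cs_def)
  ultimately show thesis using that by (simp add: cs_def)
qed

section \<open>Contracting a vertex of degree two\<close>

locale degree_two_vertex =
  fixes V :: "'a set" and E :: "'a set set" and x0 u w :: 'a
  assumes simple: "simple_graph V E" and cycle_ext: "cycle_extendable V E" and x0_in_V: "x0 \<in> V"
    and neighbours_x0: "neighbours E x0 = {u, w}" and u_ne_w: "u \<noteq> w"
begin

lemma finite_V: "finite V"
  using simple by (simp add: simple_graph_def)

lemmas edgeD = simple_graph_edgeD[OF simple]

lemma adjacent_x0_iff:
  "{x0, y} \<in> E \<longleftrightarrow> y = u \<or> y = w" "{y, x0} \<in> E \<longleftrightarrow> y = u \<or> y = w"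
proof -
  have "{x0, y} \<in> E \<longleftrightarrow> y \<in> neighbours E x0" by (simp add: neighbours_def)
  then show "{x0, y} \<in> E \<longleftrightarrow> y = u \<or> y = w" using neighbours_x0 by simp
  then show "{y, x0} \<in> E \<longleftrightarrow> y = u \<or> y = w" by (simp add: insert_commute)
qed

lemma u_w_in_V: "u \<in> V" "w \<in> V" "u \<noteq> x0" "w \<noteq> x0"
  using edgeD[of x0 u] edgeD[of x0 w] adjacent_x0_iff by auto

lemma edge_in_perfect_matching:
  assumes "e \<in> E"
  obtains M where "perfect_matching V E M" "e \<in> M"
  using cycle_ext assms unfolding cycle_extendable_def matching_covered_def by blast

lemma mate_x0:
  assumes "perfect_matching V E M"
  shows "mate V M x0 = u \<or> mate V M x0 = w"
  using matching_involutionD(4)[OF matching_involution_mate[OF simple assms] x0_in_V]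
  by (simp add: adjacent_x0_iff)

lemma no_even_cycle_through_u_w:
  assumes "is_cycle V E cs" "even (length cs)" "u \<in> set cs" "w \<in> set cs" "x0 \<notin> set cs"
  shows False
proof -
  obtain M where M: "perfect_matching (V - set cs) (del_edges E (set cs)) M"
    using cycle_ext assms(1,2) unfolding cycle_extendable_def has_perfect_matching_def by blast
  then have "M \<subseteq> del_edges E (set cs)" "\<exists>!e. e \<in> M \<and> x0 \<in> e"
    using x0_in_V assms(5) by (simp_all add: perfect_matching_def)
  then obtain e where e: "e \<in> E" "e \<inter> set cs = {}" "x0 \<in> e"
    unfolding del_edges_def by (elim ex1E) blast
  then obtain y where "e = {x0, y}"
    using simple_graph_edgeE[OF simple e(1)] by (metis insert_commute insertE singletonD)
  then show False using e adjacent_x0_iff assms(3,4) by auto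
qed

lemma u_w_not_adjacent: "{u, w} \<notin> E"
proof
  assume "{u, w} \<in> E"
  then obtain M where M: "perfect_matching V E M" "{u, w} \<in> M"
    by (rule edge_in_perfect_matching)
  define p where "p = mate V M x0"
  obtain q where pq: "{p, q} = {u, w}" "q \<noteq> x0"
    using mate_x0[OF M(1)] u_w_in_V by (auto simp: p_def insert_commute)
  have "p \<in> V" using pq(1) u_w_in_V by (auto simp: doubleton_eq_iff)
  have "{p, x0} \<in> M"
    using mate_in_matching[OF simple M(1) x0_in_V] by (simp add: p_def insert_commute)
  then have "mate V M p = x0" using mate_eqI[OF simple M(1) \<open>p \<in> V\<close>] by blast
  moreover have "mate V M p = q" using mate_eqI[OF simple M(1) \<open>p \<in> V\<close>] M(2) pq(1) by simp
  ultimately show False using pq(2) by simp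
qed

lemma common_neighbour_unique:
  assumes "{u, a} \<in> E" "{w, a} \<in> E" "{u, b} \<in> E" "{w, b} \<in> E" "a \<noteq> x0" "b \<noteq> x0"
  shows "a = b"
proof (rule ccontr)
  assume "a \<noteq> b"
  have "is_cycle V E [u, a, w, b]"
  proof -
    have "{[u, a, w, b] ! i, [u, a, w, b] ! ((i + 1) mod 4)} \<in> E" if "i < 4" for i
    proof -
      have "i = 0 \<or> i = 1 \<or> i = 2 \<or> i = 3" using that by auto
      then show ?thesis using assms(1-4) by (auto simp: insert_commute)
    qed
    moreover have "distinct [u, a, w, b]"
      using assms(1-4)[THEN edgeD(3)] \<open>a \<noteq> b\<close> u_ne_w by auto
    moreover have "set [u, a, w, b] \<subseteq> V"
      using assms(1,2)[THEN edgeD(1)] assms(1,3)[THEN edgeD(2)] by auto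
    ultimately show ?thesis unfolding is_cycle_def by auto
  qed
  then show False using no_even_cycle_through_u_w[of "[u, a, w, b]"] assms(5,6) u_w_in_V by simp
qed

lemma exists_other_neighbour:
  assumes "y = u \<or> y = w"
  obtains r where "{y, r} \<in> E" "r \<noteq> x0"
proof -
  obtain y' where y': "{y, y'} = {u, w}" using assms by (auto simp: insert_commute)
  then have "{x0, y'} \<in> E" using adjacent_x0_iff by auto
  then obtain M where M: "perfect_matching V E M" "{x0, y'} \<in> M"
    by (rule edge_in_perfect_matching)
  note mM = matching_involutionD[OF matching_involution_mate[OF simple M(1)]]
  have "y \<in> V" using assms u_w_in_V by blast
  have "mate V M x0 = y'" using mate_eqI[OF simple M(1) x0_in_V M(2)] .
  then have "mate V M y \<noteq> x0" using mM(1) y' u_ne_w by (metis doubleton_eq_iff)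
  then show thesis using that mM(4)[OF \<open>y \<in> V\<close>] by blast
qed

lemma common_neighbour_mates_differ:
  assumes M: "perfect_matching V E M" and N: "perfect_matching V E N"
    and differ: "mate V M x0 \<noteq> mate V N x0"
    and a: "{u, a} \<in> E" "{w, a} \<in> E" "a \<noteq> x0"
  shows "mate V M a \<noteq> mate V N a"
proof
  assume agree: "mate V M a = mate V N a"
  obtain cs where cs: "is_cycle V E cs" "even (length cs)" "cs ! 0 = x0"
    "cs ! 1 = mate V N x0" "last cs = mate V M x0" "\<forall>x\<in>set cs. mate V M x \<noteq> mate V N x"
    by (rule alternating_cycle[OF finite_V matching_involution_mate[OF simple M]
          matching_involution_mate[OF simple N] x0_in_V differ])
  have L: "3 \<le> length cs" and dist: "distinct cs" using cs(1) by (simp_all add: is_cycle_def)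
  have ends_uw: "{cs ! 1, last cs} = {u, w}"
    using cs(4,5) mate_x0[OF M] mate_x0[OF N] differ by auto
  \<comment> \<open>Reroute the alternating cycle through a instead of x0.\<close>
  then have "{a, cs ! 1} \<in> E" "{last cs, a} \<in> E"
    using a(1,2) by (auto simp: doubleton_eq_iff insert_commute)
  moreover have "a \<notin> set cs" using cs(6) agree by blast
  ultimately have cyc: "is_cycle V E (cs[0 := a])"
    using is_cycle_update_first[OF cs(1) _ edgeD(2)[OF a(1)]] by blast
  have "0 < length cs" using L by linarith
  then have set_cyc: "set (cs[0 := a]) = insert a (set cs - {x0})"
    using set_update_distinct[OF dist, of 0 a] cs(3) by simp
  have "cs ! 1 \<in> set cs" "last cs \<in> set cs" using L \<open>0 < length cs\<close> by simp_all
  then have "{u, w} \<subseteq> set cs" using ends_uw by (metis empty_subsetI insert_subset)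
  then show False
    using no_even_cycle_through_u_w[OF cyc] cs(2) set_cyc u_w_in_V a(3) by simp
qed

lemma common_neighbour_not_cubic:
  assumes a: "{u, a} \<in> E" "{w, a} \<in> E" "a \<noteq> x0" "neighbours E a = {u, w, c}"
    and escape: "\<And>y. y = u \<or> y = w \<Longrightarrow> \<exists>r. {y, r} \<in> E \<and> r \<noteq> x0 \<and> r \<noteq> a"
  shows False
proof -
  have "{a, c} \<in> E" using a(4) by (auto simp: neighbours_def)
  then obtain M where M: "perfect_matching V E M" "{a, c} \<in> M" by (rule edge_in_perfect_matching)
  define p where "p = mate V M x0"
  obtain q where pq: "{p, q} = {u, w}" "p \<noteq> q"
    using mate_x0[OF M(1)] u_ne_w by (auto simp: p_def insert_commute)
  obtain r where r: "{p, r} \<in> E" "r \<noteq> x0" "r \<noteq> a"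
    using escape pq(1) by (metis doubleton_eq_iff)
  obtain N where N: "perfect_matching V E N" "{p, r} \<in> N" using r(1) by (rule edge_in_perfect_matching)
  note mN = matching_involutionD[OF matching_involution_mate[OF simple N(1)]]
  have pV: "p \<in> V" "q \<in> V" and aV: "a \<in> V"
    using pq(1) u_w_in_V edgeD(2)[OF a(1)] by (auto simp: doubleton_eq_iff)
  have N_p: "mate V N p = r" using mate_eqI[OF simple N(1) pV(1) N(2)] .
  have "mate V N x0 \<noteq> p" using N_p mN(1) r(2) by metis
  then have N_x0: "mate V N x0 = q" using mate_x0[OF N(1)] pq by (auto simp: doubleton_eq_iff)
  have "mate V N a \<in> neighbours E a" using mN(4)[OF aV] by (simp add: neighbours_def)
  moreover have "mate V N a \<noteq> p" using N_p mN(1) r(3) by metis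
  moreover have "mate V N a \<noteq> q" using N_x0 mN(1) a(3) by metis
  ultimately have "mate V N a = mate V M a"
    using a(4) pq(1) mate_eqI[OF simple M(1) aV M(2)] by (auto simp: doubleton_eq_iff)
  moreover have "mate V M x0 \<noteq> mate V N x0" using N_x0 pq(2) by (simp add: p_def)
  ultimately show False using common_neighbour_mates_differ[OF M(1) N(1) _ a(1-3)] by simp
qed

abbreviation kept_edges :: "'a set set" where
  "kept_edges \<equiv> {e \<in> E. x0 \<notin> e}"

abbreviation contract :: "'a \<Rightarrow> 'a" where
  "contract \<equiv> contr_map E x0"

abbreviation contracted_edges :: "'a set set" where
  "contracted_edges \<equiv> image contract ` kept_edges"

lemma contract_eq: "contract v = (if v = u \<or> v = w then x0 else v)"
  by (simp add: contr_map_def neighbours_x0)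

lemma kept_edgeE:
  assumes "e \<in> kept_edges"
  obtains p q where "e = {p, q}" "p \<noteq> q" "p \<in> V" "q \<in> V" "p \<noteq> x0" "q \<noteq> x0"
proof -
  have "e \<in> E" "x0 \<notin> e" using assms by simp_all
  obtain p q where "e = {p, q}" "p \<noteq> q" "p \<in> V" "q \<in> V"
    using simple_graph_edgeE[OF simple \<open>e \<in> E\<close>] by blast
  then show thesis using that \<open>x0 \<notin> e\<close> by blast
qed

lemma contracted_edge_cases:
  assumes e: "e \<in> kept_edges"
  shows "(x0 \<notin> contract ` e \<and> contract ` e = e) \<or>
    (\<exists>y. contract ` e = {x0, y} \<and> y \<in> V - {x0, u, w} \<and> (e = {u, y} \<or> e = {w, y}))"
proof -
  obtain p q where pq: "e = {p, q}" "p \<noteq> q" "p \<in> V" "q \<in> V" "p \<noteq> x0" "q \<noteq> x0"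
    using e by (rule kept_edgeE)
  have "\<not> ((p = u \<or> p = w) \<and> (q = u \<or> q = w))"
    using e pq u_w_not_adjacent by (auto simp: insert_commute)
  then consider "p \<notin> {u, w}" "q \<notin> {u, w}" | "p \<in> {u, w}" "q \<notin> {u, w}"
    | "q \<in> {u, w}" "p \<notin> {u, w}"
    by blast
  then show ?thesis
  proof cases
    case 1 then show ?thesis using pq by (simp add: contract_eq)
  next
    case 2 then show ?thesis using pq by (auto simp: contract_eq)
  next
    case 3 then show ?thesis using pq by (auto simp: contract_eq insert_commute)
  qed
qed

lemma contracted_edgeE:
  assumes "e \<in> kept_edges"
  obtains p q where "contract ` e = {p, q}" "p \<noteq> q" "p \<in> V - {u, w}" "q \<in> V - {u, w}"
proof -
  obtain p q where pq: "e = {p, q}" "p \<noteq> q" "p \<in> V" "q \<in> V"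
    using assms by (rule kept_edgeE)
  from contracted_edge_cases[OF assms] show thesis
  proof
    assume "x0 \<notin> contract ` e \<and> contract ` e = e"
    then have "p \<notin> {u, w}" "q \<notin> {u, w}" "contract ` e = {p, q}"
      using pq(1) by (auto simp: contract_eq)
    then show thesis using that pq by blast
  next
    assume "\<exists>y. contract ` e = {x0, y} \<and> y \<in> V - {x0, u, w} \<and> (e = {u, y} \<or> e = {w, y})"
    then show thesis using that x0_in_V u_w_in_V by blast
  qed
qed

lemma count_contr_E: "count (contr_E E x0) e = card {e' \<in> kept_edges. contract ` e' = e}"
proof -
  have fin: "finite kept_edges" using simple_graph_finite_edges[OF simple] by simp
  have "count (contr_E E x0) e =
      (\<Sum>e'\<in>image contract -` {e} \<inter> kept_edges. count (mset_set kept_edges) e')"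
    unfolding contr_E_def count_image_mset using fin by simp
  also have "\<dots> = card (image contract -` {e} \<inter> kept_edges)" using fin by simp
  also have "image contract -` {e} \<inter> kept_edges = {e' \<in> kept_edges. contract ` e' = e}" by auto
  finally show ?thesis .
qed

lemma set_mset_contr_E: "set_mset (contr_E E x0) = contracted_edges"
  using simple_graph_finite_edges[OF simple] by (simp add: contr_E_def)

lemma contracted_preimage:
  "{e' \<in> kept_edges. contract ` e' = e} \<subseteq> {e} \<or>
   (\<exists>y. e = {x0, y} \<and> y \<noteq> x0 \<and> {e' \<in> kept_edges. contract ` e' = e} \<subseteq> {{u, y}, {w, y}})"
proof (cases "\<exists>e'\<in>kept_edges. contract ` e' = e \<and> x0 \<in> e")
  case False
  then have "e' = e" if "e' \<in> kept_edges" "contract ` e' = e" for e'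
    using contracted_edge_cases[OF that(1)] that by auto
  then show ?thesis by blast
next
  case True
  then obtain e' where e': "e' \<in> kept_edges" "contract ` e' = e" "x0 \<in> e" by blast
  then obtain y where y: "e = {x0, y}" "y \<noteq> x0"
    using contracted_edge_cases[OF e'(1)] by auto
  have "e' \<in> {{u, y}, {w, y}}" if "e' \<in> kept_edges" "contract ` e' = e" for e'
    using contracted_edge_cases[OF that(1)] that y by (auto simp: doubleton_eq_iff)
  then show ?thesis using y by blast
qed

lemma count_contr_E_le_2: "count (contr_E E x0) e \<le> 2"
proof -
  define P where "P = {e' \<in> kept_edges. contract ` e' = e}"
  from contracted_preimage[of e, folded P_def] have "card P \<le> 2"
  proof
    assume "P \<subseteq> {e}"
    then show ?thesis using card_mono[of "{e}" P] by simp
  next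
    assume "\<exists>y. e = {x0, y} \<and> y \<noteq> x0 \<and> P \<subseteq> {{u, y}, {w, y}}"
    then obtain y where "P \<subseteq> {{u, y}, {w, y}}" by blast
    then have "card P \<le> card {{u, y}, {w, y}}" by (simp add: card_mono)
    also have "\<dots> \<le> 2" by (simp add: card_insert_if)
    finally show ?thesis .
  qed
  then show ?thesis by (simp add: count_contr_E P_def)
qed

lemma multiple_contracted_edge:
  assumes "2 \<le> count (contr_E E x0) e"
  obtains y where "e = {x0, y}" "y \<noteq> x0" "{u, y} \<in> E" "{w, y} \<in> E"
proof -
  define P where "P = {e' \<in> kept_edges. contract ` e' = e}"
  have P: "2 \<le> card P" using assms by (simp add: count_contr_E P_def)
  have "\<not> P \<subseteq> {e}" using P card_mono[of "{e}" P] by auto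
  then obtain y where y: "e = {x0, y}" "y \<noteq> x0" "P \<subseteq> {{u, y}, {w, y}}"
    using contracted_preimage[of e, folded P_def] by blast
  have "{u, y} \<in> P"
  proof (rule ccontr)
    assume "{u, y} \<notin> P"
    then have "P \<subseteq> {{w, y}}" using y(3) by blast
    then show False using P card_mono[of "{{w, y}}" P] by simp
  qed
  moreover have "{w, y} \<in> P"
  proof (rule ccontr)
    assume "{w, y} \<notin> P"
    then have "P \<subseteq> {{u, y}}" using y(3) by blast
    then show False using P card_mono[of "{{u, y}}" P] by simp
  qed
  ultimately show thesis using that y(1,2) by (simp add: P_def)
qed

lemma contr_E_simple_or_two_multiple_edges:
  "mg_simple (contr_E E x0) \<or> mg_exactly_two_multiple_edges (contr_E E x0)"
proof (cases "{e. 2 \<le> count (contr_E E x0) e} = {}")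
  case True
  have "card e = 2 \<and> count (contr_E E x0) e = 1" if e: "e \<in># contr_E E x0" for e
  proof -
    obtain e' where "e' \<in> kept_edges" "e = contract ` e'" using e set_mset_contr_E by auto
    then have "card e = 2" by (metis contracted_edgeE card_2_iff)
    moreover have "0 < count (contr_E E x0) e" using e by simp
    moreover have "\<not> 2 \<le> count (contr_E E x0) e" using True by blast
    ultimately show ?thesis by linarith
  qed
  then show ?thesis unfolding mg_simple_def by blast
next
  case False
  then obtain e0 where e0: "2 \<le> count (contr_E E x0) e0" by blast
  obtain y0 where y0: "e0 = {x0, y0}" "y0 \<noteq> x0" "{u, y0} \<in> E" "{w, y0} \<in> E"
    using multiple_contracted_edge[OF e0] .
  have "{e. 2 \<le> count (contr_E E x0) e} = {e0}"
  proof (intro equalityI subsetI)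
    fix e assume "e \<in> {e. 2 \<le> count (contr_E E x0) e}"
    then obtain y where y: "e = {x0, y}" "y \<noteq> x0" "{u, y} \<in> E" "{w, y} \<in> E"
      using multiple_contracted_edge by blast
    then show "e \<in> {e0}" using common_neighbour_unique[OF y(3,4) y0(3,4) y(2) y0(2)] y0(1) by simp
  qed (use e0 in simp)
  then show ?thesis unfolding mg_exactly_two_multiple_edges_def using count_contr_E_le_2 by simp
qed

lemma underlying_simple_contr_E: "underlying_simple (contr_E E x0) = contracted_edges"
proof -
  have "card e = 2" if "e \<in> contracted_edges" for e
    using that by (auto elim!: contracted_edgeE)
  then show ?thesis unfolding underlying_simple_def set_mset_contr_E by blast
qed

lemma contr_V_eq: "contr_V V E x0 = V - {u, w}"
  by (simp add: contr_V_def neighbours_x0)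

lemma simple_graph_contracted: "simple_graph (V - {u, w}) contracted_edges"
  unfolding simple_graph_def
proof (intro conjI ballI)
  show "finite (V - {u, w})" using finite_V by simp
  fix e assume "e \<in> contracted_edges"
  then show "\<exists>a b. a \<noteq> b \<and> a \<in> V - {u, w} \<and> b \<in> V - {u, w} \<and> e = {a, b}"
    by (auto elim!: contracted_edgeE)
qed

lemma neighbours_contracted_x0:
  "(neighbours E u \<union> neighbours E w) - {x0} \<subseteq> neighbours contracted_edges x0"
proof
  fix y assume y: "y \<in> (neighbours E u \<union> neighbours E w) - {x0}"
  then obtain p where p: "p = u \<or> p = w" "{p, y} \<in> E" "y \<noteq> x0" by (auto simp: neighbours_def)
  have "y \<noteq> u" "y \<noteq> w"
    using p edgeD(3)[OF p(2)] u_w_not_adjacent by (auto simp: insert_commute)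
  then have "contract ` {p, y} = {x0, y}" using p(1) by (auto simp: contract_eq)
  moreover have "{p, y} \<in> kept_edges" using p u_w_in_V by auto
  ultimately have "{x0, y} \<in> contracted_edges" by (rule image_eqI[OF sym])
  then show "y \<in> neighbours contracted_edges x0" by (simp add: neighbours_def)
qed

lemma neighbours_contracted:
  assumes v: "v \<in> V - {u, w}" "v \<noteq> x0"
  shows "neighbours contracted_edges v = contract ` neighbours E v"
proof (intro equalityI subsetI)
  have contract_v: "contract p = v \<longleftrightarrow> p = v" for p
    using v by (cases "p = u \<or> p = w") (auto simp: contract_eq)
  fix y assume "y \<in> neighbours contracted_edges v"
  then obtain e' where e': "e' \<in> kept_edges" "contract ` e' = {v, y}" by (auto simp: neighbours_def)
  obtain p q where pq: "e' = {p, q}" using e'(1) by (rule kept_edgeE)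
  then have "contract p = v \<and> contract q = y \<or> contract q = v \<and> contract p = y"
    using e'(2) by (auto simp: doubleton_eq_iff)
  then have "p = v \<and> y = contract q \<or> q = v \<and> y = contract p" using contract_v by auto
  then have "q \<in> neighbours E v \<and> y = contract q \<or> p \<in> neighbours E v \<and> y = contract p"
    using e'(1) pq by (auto simp: neighbours_def insert_commute)
  then show "y \<in> contract ` neighbours E v" by blast
next
  fix y assume "y \<in> contract ` neighbours E v"
  then obtain q where q: "{v, q} \<in> E" "y = contract q" by (auto simp: neighbours_def)
  have "contract ` {v, q} = {v, y}" using q(2) v by (simp add: contract_eq)
  moreover have "q \<noteq> x0" using q(1) v by (auto simp: adjacent_x0_iff)
  then have "{v, q} \<in> kept_edges" using q(1) v by simp
  ultimately have "{v, y} \<in> contracted_edges" by (rule image_eqI[OF sym])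
  then show "y \<in> neighbours contracted_edges v" by (simp add: neighbours_def)
qed

lemma degree_contracted_eq:
  assumes v: "v \<in> V - {u, w}" "v \<noteq> x0" and not_common: "\<not> ({u, v} \<in> E \<and> {w, v} \<in> E)"
  shows "degree contracted_edges v = degree E v"
proof -
  have x0_notin: "x0 \<notin> neighbours E v"
    using v by (auto simp: neighbours_def adjacent_x0_iff)
  have "inj_on contract (neighbours E v)"
  proof (rule inj_onI)
    fix y1 y2 assume y: "y1 \<in> neighbours E v" "y2 \<in> neighbours E v" "contract y1 = contract y2"
    show "y1 = y2"
    proof (rule ccontr)
      assume "y1 \<noteq> y2"
      then have "{y1, y2} = {u, w}"
        using y x0_notin u_ne_w by (auto simp: contract_eq split: if_splits)
      then show False using y(1,2) not_common by (auto simp: neighbours_def doubleton_eq_iff insert_commute)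
    qed
  qed
  then show ?thesis unfolding degree_def neighbours_contracted[OF v] by (rule card_image)
qed

lemma degree_u_w_ge_3:
  assumes irr: "irreducible V E" and y: "y = u \<or> y = w"
  shows "3 \<le> degree E y"
proof -
  have "{x0, y} \<in> E" using y by (simp add: adjacent_x0_iff)
  moreover have "degree E x0 = 2" using neighbours_x0 u_ne_w by (simp add: degree_def)
  ultimately have "degree E y \<noteq> 2"
    using irr unfolding irreducible_def by (metis (no_types))
  moreover obtain r where r: "{y, r} \<in> E" "r \<noteq> x0" using y by (rule exists_other_neighbour)
  have "{x0, r} \<subseteq> neighbours E y"
    using r \<open>{x0, y} \<in> E\<close> by (simp add: neighbours_def insert_commute)
  then have "card {x0, r} \<le> degree E y"
    unfolding degree_def by (rule card_mono[OF simple_graph_finite_neighbours[OF simple]])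
  then have "2 \<le> degree E y" using r(2) by simp
  ultimately show ?thesis by linarith
qed

lemma degree_contracted_x0_ge_3:
  assumes irr: "irreducible V E"
  shows "3 \<le> degree contracted_edges x0"
proof -
  let ?A = "neighbours E u - {x0}" and ?B = "neighbours E w - {x0}"
  have fin: "finite ?A" "finite ?B" using simple_graph_finite_neighbours[OF simple] by auto
  have "x0 \<in> neighbours E u" "x0 \<in> neighbours E w"
    by (simp_all add: neighbours_def adjacent_x0_iff)
  then have "card ?A = degree E u - 1" "card ?B = degree E w - 1" by (simp_all add: degree_def)
  then have "2 \<le> card ?A" "2 \<le> card ?B" using degree_u_w_ge_3[OF irr] by fastforce+
  moreover have "card (?A \<inter> ?B) \<le> 1"
    using common_neighbour_unique fin by (auto simp: card_le_Suc0_iff_eq neighbours_def)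
  moreover have "card (?A \<union> ?B) + card (?A \<inter> ?B) = card ?A + card ?B"
    using card_Un_Int[OF fin] by simp
  ultimately have "3 \<le> card (?A \<union> ?B)" by linarith
  also have "\<dots> \<le> degree contracted_edges x0"
    unfolding degree_def using neighbours_contracted_x0
    by (intro card_mono[OF simple_graph_finite_neighbours[OF simple_graph_contracted]]) auto
  finally show ?thesis .
qed

lemma degree_contracted_common_neighbour:
  assumes irr: "irreducible V E" and v: "v \<in> V - {u, w}" "v \<noteq> x0"
    and common: "{u, v} \<in> E" "{w, v} \<in> E"
  shows "degree contracted_edges v \<noteq> 2"
proof
  assume deg: "degree contracted_edges v = 2"
  let ?N = "neighbours E v"
  have uw: "u \<in> ?N" "w \<in> ?N" using common by (simp_all add: neighbours_def insert_commute)
  have x0: "x0 \<notin> ?N" using v by (simp add: neighbours_def adjacent_x0_iff)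
  have "contract ` (?N - {u, w}) = ?N - {u, w}" by (auto simp: contract_eq)
  moreover have "?N = insert u (insert w (?N - {u, w}))" using uw by auto
  ultimately have "contract ` ?N = insert x0 (?N - {u, w})"
    by (metis contract_eq image_insert insert_absorb2)
  then have "card (insert x0 (?N - {u, w})) = 2"
    using deg neighbours_contracted[OF v] by (simp add: degree_def)
  then have "card (?N - {u, w}) = 1"
    using x0 simple_graph_finite_neighbours[OF simple] by simp
  then obtain c where "?N - {u, w} = {c}" by (rule card_1_singletonE)
  then have N: "?N = {u, w, c}" using uw by auto
  have "\<exists>r. {y, r} \<in> E \<and> r \<noteq> x0 \<and> r \<noteq> v" if y: "y = u \<or> y = w" for y
  proof (rule ccontr)
    assume "\<not> ?thesis"
    then have "neighbours E y \<subseteq> {x0, v}" by (auto simp: neighbours_def)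
    then have "degree E y \<le> card {x0, v}" unfolding degree_def by (rule card_mono[rotated]) simp
    also have "\<dots> \<le> 2" by (cases "x0 = v") simp_all
    finally show False using degree_u_w_ge_3[OF irr y] by simp
  qed
  then show False by (rule common_neighbour_not_cubic[OF common v(2) N])
qed

lemma contracted_edge_avoiding_x0:
  assumes "{a, b} \<in> contracted_edges" "a \<noteq> x0" "b \<noteq> x0"
  shows "{a, b} \<in> E"
proof -
  from assms(1) obtain e' where e': "{a, b} = contract ` e'" "e' \<in> kept_edges" by (rule imageE)
  have "x0 \<notin> contract ` e'" using e'(1) assms(2,3) by auto
  then have "contract ` e' = e'" using contracted_edge_cases[OF e'(2)] by auto
  then show ?thesis using e' by simp
qed

lemma irreducible_contracted:
  assumes irr: "irreducible V E"
  shows "irreducible (V - {u, w}) contracted_edges"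
  unfolding irreducible_def
proof (intro conjI allI impI simple_graph_contracted)
  fix a b assume ab: "{a, b} \<in> contracted_edges"
  have abV: "a \<in> V - {u, w}" "b \<in> V - {u, w}"
    using simple_graph_edgeD[OF simple_graph_contracted ab] by simp_all
  consider "a = x0 \<or> b = x0"
    | "a \<noteq> x0" "b \<noteq> x0" "{u, a} \<in> E \<and> {w, a} \<in> E \<or> {u, b} \<in> E \<and> {w, b} \<in> E"
    | "a \<noteq> x0" "b \<noteq> x0"
      "\<not> ({u, a} \<in> E \<and> {w, a} \<in> E)" "\<not> ({u, b} \<in> E \<and> {w, b} \<in> E)"
    by blast
  then show "\<not> (degree contracted_edges a = 2 \<and> degree contracted_edges b = 2)"
  proof cases
    case 1
    then show ?thesis using degree_contracted_x0_ge_3[OF irr] by auto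
  next
    case 2
    then show ?thesis using degree_contracted_common_neighbour[OF irr] abV by auto
  next
    case 3
    then have "degree contracted_edges a = degree E a" "degree contracted_edges b = degree E b"
      using degree_contracted_eq abV by simp_all
    moreover have "{a, b} \<in> E" using contracted_edge_avoiding_x0[OF ab 3(1,2)] .
    ultimately show ?thesis using irr unfolding irreducible_def by simp
  qed
qed

end

theorem corollary5p2:
  fixes V :: "'a set" and E :: "'a set set" and x0 :: 'a
  assumes "simple_graph V E"
    and "cycle_extendable V E"
    and "x0 \<in> V"
    and "degree E x0 = 2"
  shows "(mg_simple (contr_E E x0) \<or> mg_exactly_two_multiple_edges (contr_E E x0)) \<and>
         (irreducible V E \<longrightarrow>
            irreducible (contr_V V E x0) (underlying_simple (contr_E E x0)))"
proof -
  obtain u w where "neighbours E x0 = {u, w}" "u \<noteq> w"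
    using assms(4) unfolding degree_def by (meson card_2_iff)
  then interpret degree_two_vertex V E x0 u w
    using assms(1-3) by unfold_locales
  show ?thesis
    using contr_E_simple_or_two_multiple_edges irreducible_contracted
    by (simp add: underlying_simple_contr_E contr_V_eq)
qed

end
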